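(* Let $c>0$ and let $(\vartheta_n)$ be a sequence with $0\le\vartheta_n\nearrow\vartheta_\infty$, $\vartheta_\infty\in(0,1)$. For each $n$ let $T_n>0$ and $u_n$ be a classical entire solution of $\partial_t u=\partial_{xx}u-c\partial_x u$ ($x>0$), $\partial_x u=1+\vartheta_n h(u)$ ($x=0$), with $u_n(\cdot,t)\in Y_c$, $u_n(\cdot,T_n)=u_n(\cdot,0)-2\pi$, $\partial_t u_n<0$, and $u_n(0,0)=0$. Then there exist $\lambda,\mu>0$ such that for all $n$, $$\frac{2\pi}{\mu}\le T_n\le\frac{2\pi}{\lambda}.$$
   Context: $h\in C^2(\mathbb{R},\mathbb{R})$ is $2\pi$-periodic with $\max h=1$, $\min h=h(\pi)=-1$. $Y_c$ is the space of $v$ on $[0,\infty)$ with $x\mapsto e^{-cx/2}v(x)$ bounded and uniformly continuous. *)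

theory Defs
  imports "HOL-Analysis.Analysis"
begin

definition C2_fun :: "(real \<Rightarrow> real) \<Rightarrow> bool" where
  "C2_fun h \<longleftrightarrow> (\<exists>h' h''. (\<forall>x. (h has_real_derivative h' x) (at x)) \<and>
      (\<forall>x. (h' has_real_derivative h'' x) (at x)) \<and> continuous_on UNIV h'')"

definition in_Yc :: "real \<Rightarrow> (real \<Rightarrow> real) \<Rightarrow> bool" where
  "in_Yc c v \<longleftrightarrow>
     bounded ((\<lambda>x. exp (- c * x / 2) * v x) ` {0..}) \<and>
     uniformly_continuous_on {0..} (\<lambda>x. exp (- c * x / 2) * v x)"

definition classical_entire_sol ::
  "(real \<Rightarrow> real) \<Rightarrow> real \<Rightarrow> real \<Rightarrow> (real \<Rightarrow> real \<Rightarrow> real) \<Rightarrow> bool" where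
  "classical_entire_sol h c \<theta> u \<longleftrightarrow>
     continuous_on ({0..} \<times> UNIV) (\<lambda>(x,t). u x t) \<and>
     (\<exists>ux uxx ut.
        (\<forall>x\<ge>0. \<forall>t. ((\<lambda>y. u y t) has_real_derivative ux x t) (at x within {0..})) \<and>
        continuous_on ({0..} \<times> UNIV) (\<lambda>(x,t). ux x t) \<and>
        (\<forall>x>0. \<forall>t. ((\<lambda>y. ux y t) has_real_derivative uxx x t) (at x)) \<and>
        (\<forall>x>0. \<forall>t. ((\<lambda>s. u x s) has_real_derivative ut x t) (at t)) \<and>
        continuous_on ({0<..} \<times> UNIV) (\<lambda>(x,t). uxx x t) \<and>
        continuous_on ({0<..} \<times> UNIV) (\<lambda>(x,t). ut x t) \<and>
        (\<forall>x>0. \<forall>t. ut x t = uxx x t - c * ux x t) \<and>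
        (\<forall>t. ux 0 t = 1 + \<theta> * h (u 0 t)))"

end

theory Submission
  imports Defs "HOL-Real_Asymp.Real_Asymp"
begin

text \<open>Integrate the equation over one period in time. The flux
  \<open>F x = \<integral>\<^sub>0\<^sup>T u\<^sub>x(x,t) dt\<close> then solves the ODE \<open>F' = c F - 2\<pi>\<close>, because \<open>u\<close> drops by
  exactly \<open>2\<pi>\<close> over a period; hence \<open>F x = K e\<^bsup>cx\<^esup> + 2\<pi>/c\<close>. Since \<open>u\<close> decreases in time,
  \<open>|u(x,t)| \<le> |u(x,0)| + 2\<pi>\<close> on a period, and membership in \<open>Y\<^sub>c\<close> makes
  \<open>\<integral>\<^sub>0\<^sup>T u(x,t) dt\<close>, an antiderivative of \<open>F\<close>, grow at most like \<open>e\<^bsup>cx/2\<^esup>\<close>; so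
  \<open>K = 0\<close> and \<open>F 0 = 2\<pi>/c\<close>. The boundary condition gives \<open>1 - \<theta> \<le> u\<^sub>x(0,t) \<le> 1 + \<theta>\<close>,
  whence \<open>T(1 - \<theta>) \<le> 2\<pi>/c \<le> T(1 + \<theta>)\<close>, and \<open>\<theta>\<^sub>n \<le> \<theta>\<^sub>\<infinity> < 1\<close> makes the bounds uniform.\<close>

lemma continuous_on_slice:
  assumes "continuous_on (A \<times> UNIV) (\<lambda>(x, t). f x t)" and "x \<in> A"
  shows "continuous_on S (f x)"
  using continuous_on_compose_Pair[OF assms(1) continuous_on_const continuous_on_id] assms(2)
  by auto

lemma linear_ode_solution:
  fixes f :: "real \<Rightarrow> real"
  assumes c: "c \<noteq> 0"
    and f': "\<And>x. x > 0 \<Longrightarrow> (f has_real_derivative c * f x + b) (at x)"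
  shows "\<exists>K. \<forall>x>0. f x = K * exp (c * x) - b / c"
proof -
  have "\<exists>K. \<forall>x\<in>{0<..}. exp (- c * x) * (f x + b / c) = K"
  proof (rule has_field_derivative_zero_constant)
    fix x :: real assume "x \<in> {0<..}"
    then have "((\<lambda>x. exp (- c * x) * (f x + b / c)) has_real_derivative
        - c * exp (- c * x) * (f x + b / c) + exp (- c * x) * (c * f x + b)) (at x)"
      by (auto intro!: derivative_eq_intros f')
    moreover have "- c * exp (- c * x) * (f x + b / c) + exp (- c * x) * (c * f x + b) = 0"
      using c by (simp add: field_simps)
    ultimately show "((\<lambda>x. exp (- c * x) * (f x + b / c)) has_real_derivative 0) (at x within {0<..})"
      by (auto intro: has_field_derivative_at_within)
  qed simp
  then obtain K where "\<And>x. x > 0 \<Longrightarrow> exp (- c * x) * (f x + b / c) = K"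
    by auto
  then have "f x = K * exp (c * x) - b / c" if "x > 0" for x
    using that c by (auto simp: exp_minus field_simps)
  then show ?thesis by blast
qed

lemma exp_coefficient_zero_if_slow_growth:
  fixes g :: "real \<Rightarrow> real"
  assumes c: "c > 0"
    and g': "\<And>x. x > 0 \<Longrightarrow> (g has_real_derivative K * exp (c * x) + a) (at x)"
    and growth: "\<And>x. x > 0 \<Longrightarrow> \<bar>g x\<bar> \<le> M * exp (c * x / 2) + N"
  shows "K = 0"
proof -
  have "\<exists>C. \<forall>x\<in>{0<..}. g x - a * x - K * exp (c * x) / c = C"
  proof (rule has_field_derivative_zero_constant)
    fix x :: real assume "x \<in> {0<..}"
    then have "((\<lambda>x. g x - a * x - K * exp (c * x) / c) has_real_derivative
        (K * exp (c * x) + a) - a - K * (c * exp (c * x)) / c) (at x)"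
      by (auto intro!: derivative_eq_intros g')
    then show "((\<lambda>x. g x - a * x - K * exp (c * x) / c) has_real_derivative 0) (at x within {0<..})"
      using c by (auto intro: has_field_derivative_at_within)
  qed simp
  then obtain C where "\<And>x. x > 0 \<Longrightarrow> g x - a * x - K * exp (c * x) / c = C"
    by auto
  then have C: "g x = C + a * x + K * exp (c * x) / c" if "x > 0" for x
    using that by fastforce
  have "((\<lambda>x. exp (- c * x) * C + a * x * exp (- c * x) + K / c) \<longlongrightarrow> K / c) at_top"
    using c by real_asymp
  moreover have "\<forall>\<^sub>F x in at_top. exp (- c * x) * C + a * x * exp (- c * x) + K / c = exp (- c * x) * g x"
    using eventually_gt_at_top[of 0]
    by eventually_elim (use c in \<open>simp add: C exp_minus field_simps\<close>)
  ultimately have to_K: "((\<lambda>x. exp (- c * x) * g x) \<longlongrightarrow> K / c) at_top"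
    by (rule Lim_transform_eventually)
  have to_0: "((\<lambda>x. exp (- c * x) * g x) \<longlongrightarrow> 0) at_top"
  proof (rule Lim_null_comparison)
    show "((\<lambda>x. exp (- c * x) * (M * exp (c * x / 2) + N)) \<longlongrightarrow> 0) at_top"
      using c by real_asymp
    show "\<forall>\<^sub>F x in at_top. norm (exp (- c * x) * g x) \<le> exp (- c * x) * (M * exp (c * x / 2) + N)"
      using eventually_gt_at_top[of 0]
      by eventually_elim (simp add: abs_mult growth)
  qed
  have "K / c = 0"
    using tendsto_unique[OF _ to_K to_0] by simp
  then show ?thesis
    using c by simp
qed

lemma in_Yc_growth:
  assumes "in_Yc c v"
  obtains B where "\<And>x. x \<ge> 0 \<Longrightarrow> \<bar>v x\<bar> \<le> B * exp (c * x / 2)"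
proof -
  obtain B where B: "\<And>x. x \<ge> 0 \<Longrightarrow> \<bar>exp (- c * x / 2) * v x\<bar> \<le> B"
    using assms unfolding in_Yc_def bounded_iff by auto
  have "\<bar>v x\<bar> \<le> B * exp (c * x / 2)" if "x \<ge> 0" for x
    using B[OF that] by (simp add: abs_mult exp_minus field_simps)
  then show thesis by (rule that)
qed

locale advection_diffusion_solution =
  fixes c :: real and u ux uxx ut :: "real \<Rightarrow> real \<Rightarrow> real"
  assumes cont_u: "continuous_on ({0..} \<times> UNIV) (\<lambda>(x, t). u x t)"
    and deriv_x: "\<And>x t. x \<ge> 0 \<Longrightarrow> ((\<lambda>y. u y t) has_real_derivative ux x t) (at x within {0..})"
    and cont_ux: "continuous_on ({0..} \<times> UNIV) (\<lambda>(x, t). ux x t)"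
    and deriv_xx: "\<And>x t. x > 0 \<Longrightarrow> ((\<lambda>y. ux y t) has_real_derivative uxx x t) (at x)"
    and deriv_t: "\<And>x t. x > 0 \<Longrightarrow> (u x has_real_derivative ut x t) (at t)"
    and cont_uxx: "continuous_on ({0<..} \<times> UNIV) (\<lambda>(x, t). uxx x t)"
    and pde: "\<And>x t. x > 0 \<Longrightarrow> ut x t = uxx x t - c * ux x t"

lemma classical_entire_solE:
  assumes "classical_entire_sol h c \<theta> u"
  obtains ux uxx ut where "advection_diffusion_solution c u ux uxx ut"
    and "\<And>t. ux 0 t = 1 + \<theta> * h (u 0 t)"
  by (insert assms[unfolded classical_entire_sol_def], elim conjE exE,
      rule that[OF advection_diffusion_solution.intro]) blast+

context advection_diffusion_solution
begin

lemma integrable_u: "x \<ge> 0 \<Longrightarrow> u x integrable_on {a..b}"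
  using continuous_on_slice[OF cont_u] by (intro integrable_continuous_interval) auto

lemma integrable_ux: "x \<ge> 0 \<Longrightarrow> ux x integrable_on {a..b}"
  using continuous_on_slice[OF cont_ux] by (intro integrable_continuous_interval) auto

lemma integrable_uxx: "x > 0 \<Longrightarrow> uxx x integrable_on {a..b}"
  using continuous_on_slice[OF cont_uxx] by (intro integrable_continuous_interval) auto

lemma integral_u_has_derivative:
  assumes "x > 0"
  shows "((\<lambda>x. integral {a..b} (u x)) has_real_derivative integral {a..b} (ux x)) (at x)"
proof -
  have "((\<lambda>x. integral (cbox a b) (u x)) has_real_derivative integral (cbox a b) (ux x))
      (at x within {0<..})"
  proof (rule leibniz_rule_field_derivative)
    show "((\<lambda>y. u y t) has_real_derivative ux y t) (at y within {0<..})" if "y \<in> {0<..}" for y t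
      using that by (intro DERIV_subset[OF deriv_x]) auto
    show "continuous_on ({0<..} \<times> cbox a b) (\<lambda>(x, t). ux x t)"
      by (rule continuous_on_subset[OF cont_ux]) auto
    show "u y integrable_on cbox a b" if "y \<in> {0<..}" for y
      using that by (simp add: integrable_u)
  qed (use assms in auto)
  then show ?thesis
    using assms at_within_open[of x "{0<..}"] by simp
qed

lemma integral_ux_has_derivative:
  assumes "x > 0"
  shows "((\<lambda>x. integral {a..b} (ux x)) has_real_derivative integral {a..b} (uxx x)) (at x)"
proof -
  have "((\<lambda>x. integral (cbox a b) (ux x)) has_real_derivative integral (cbox a b) (uxx x))
      (at x within {0<..})"
  proof (rule leibniz_rule_field_derivative)
    show "((\<lambda>y. ux y t) has_real_derivative uxx y t) (at y within {0<..})" if "y \<in> {0<..}" for y t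
      using that by (simp add: has_field_derivative_at_within deriv_xx)
    show "continuous_on ({0<..} \<times> cbox a b) (\<lambda>(x, t). uxx x t)"
      by (rule continuous_on_subset[OF cont_uxx]) auto
    show "ux y integrable_on cbox a b" if "y \<in> {0<..}" for y
      using that by (simp add: integrable_ux)
  qed (use assms in auto)
  then show ?thesis
    using assms at_within_open[of x "{0<..}"] by simp
qed

lemma integral_ux_continuous: "continuous_on {0..} (\<lambda>x. integral {a..b} (ux x))"
proof -
  have "continuous_on {0..} (\<lambda>x. integral (cbox a b) (ux x))"
    by (intro integral_continuous_on_param continuous_on_subset[OF cont_ux]) auto
  then show ?thesis by simp
qed

lemma integral_pde:
  assumes "x > 0" and "T \<ge> 0"
  shows "integral {0..T} (uxx x) - c * integral {0..T} (ux x) = u x T - u x 0"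
proof -
  have "(ut x has_integral u x T - u x 0) {0..T}"
    using assms deriv_t
    by (intro fundamental_theorem_of_calculus)
      (auto simp: has_real_derivative_iff_has_vector_derivative[symmetric]
        intro: has_field_derivative_at_within)
  moreover have "ut x = (\<lambda>t. uxx x t - c * ux x t)"
    using assms pde by auto
  ultimately have "((\<lambda>t. uxx x t - c * ux x t) has_integral u x T - u x 0) {0..T}"
    by simp
  moreover have "((\<lambda>t. uxx x t - c * ux x t) has_integral
      integral {0..T} (uxx x) - c * integral {0..T} (ux x)) {0..T}"
    using assms integrable_ux integrable_uxx
    by (intro has_integral_diff has_integral_mult_right integrable_integral) auto
  ultimately show ?thesis
    using has_integral_unique by blast
qed

lemma flux_over_period:
  assumes c: "c > 0" and T: "T > 0"
    and period: "\<And>x. x \<ge> 0 \<Longrightarrow> u x T = u x 0 - 2 * pi"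
    and antimono: "\<And>x t t'. x \<ge> 0 \<Longrightarrow> t \<le> t' \<Longrightarrow> u x t' \<le> u x t"
    and Y: "in_Yc c (\<lambda>x. u x 0)"
  shows "integral {0..T} (ux 0) = 2 * pi / c"
proof -
  define F where "F x = integral {0..T} (ux x)" for x
  have F': "(F has_real_derivative c * F x + - 2 * pi) (at x)" if "x > 0" for x
  proof -
    have "integral {0..T} (uxx x) = c * F x - 2 * pi"
      using integral_pde[OF that, of T] T period[of x] that unfolding F_def by simp
    then show ?thesis
      using integral_ux_has_derivative[OF that, of 0 T] unfolding F_def by simp
  qed
  obtain K where K: "\<And>x. x > 0 \<Longrightarrow> F x = K * exp (c * x) + 2 * pi / c"
    using linear_ode_solution[of c F "- 2 * pi"] c F' by auto
  obtain B where B: "\<And>x. x \<ge> 0 \<Longrightarrow> \<bar>u x 0\<bar> \<le> B * exp (c * x / 2)"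
    using in_Yc_growth[OF Y] by blast
  have growth: "\<bar>integral {0..T} (u x)\<bar> \<le> T * B * exp (c * x / 2) + T * (2 * pi)"
    if x: "x > 0" for x
  proof -
    have "norm (integral {0..T} (u x)) \<le> (B * exp (c * x / 2) + 2 * pi) * (T - 0)"
    proof (rule integral_bound)
      show "continuous_on {0..T} (u x)"
        using continuous_on_slice[OF cont_u] x by auto
      show "norm (u x t) \<le> B * exp (c * x / 2) + 2 * pi" if "t \<in> {0..T}" for t
      proof -
        have "u x 0 - 2 * pi \<le> u x t" and "u x t \<le> u x 0"
          using antimono[of x t T] antimono[of x 0 t] period[of x] x that by auto
        then show ?thesis
          using B[of x] x unfolding real_norm_def by linarith
      qed
    qed (use T in auto)
    then show ?thesis
      by (simp add: algebra_simps)
  qed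
  have "K = 0"
  proof (rule exp_coefficient_zero_if_slow_growth[OF c _ growth])
    show "((\<lambda>x. integral {0..T} (u x)) has_real_derivative K * exp (c * x) + 2 * pi / c) (at x)"
      if "x > 0" for x
      using integral_u_has_derivative[OF that, of 0 T] K[OF that] unfolding F_def by simp
  qed
  have "continuous_on (closure {0<..}) F"
    using integral_ux_continuous unfolding F_def by simp
  then have "F 0 = 2 * pi / c"
    by (rule continuous_constant_on_closure) (use K \<open>K = 0\<close> in auto)
  then show ?thesis
    unfolding F_def .
qed

end

lemma period_bounds:
  fixes h :: "real \<Rightarrow> real"
  assumes c: "c > 0" and T: "T > 0"
    and sol: "classical_entire_sol h c \<theta> u"
    and \<theta>: "0 \<le> \<theta>" and h_bound: "\<And>y. \<bar>h y\<bar> \<le> 1"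
    and period: "\<And>x. x \<ge> 0 \<Longrightarrow> u x T = u x 0 - 2 * pi"
    and antimono: "\<And>x t t'. x \<ge> 0 \<Longrightarrow> t \<le> t' \<Longrightarrow> u x t' \<le> u x t"
    and Y: "in_Yc c (\<lambda>x. u x 0)"
  shows "T * (1 - \<theta>) \<le> 2 * pi / c \<and> 2 * pi / c \<le> T * (1 + \<theta>)"
proof -
  obtain ux uxx ut where adv: "advection_diffusion_solution c u ux uxx ut"
    and bc: "\<And>t. ux 0 t = 1 + \<theta> * h (u 0 t)"
    using classical_entire_solE[OF sol] by blast
  interpret advection_diffusion_solution c u ux uxx ut
    by (fact adv)
  have flux: "integral {0..T} (ux 0) = 2 * pi / c"
    by (rule flux_over_period[OF c T period antimono Y])
  have flux_range: "1 - \<theta> \<le> ux 0 t \<and> ux 0 t \<le> 1 + \<theta>" for t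
  proof -
    have "\<bar>\<theta> * h (u 0 t)\<bar> \<le> \<theta>"
      using \<theta> h_bound[of "u 0 t"] by (simp add: abs_mult mult_left_le)
    then show ?thesis
      using bc[of t] by (simp add: abs_le_iff)
  qed
  have "integral {0..T} (\<lambda>_. 1 - \<theta>) \<le> integral {0..T} (ux 0)"
    by (rule integral_le) (use flux_range integrable_ux[of 0] in auto)
  moreover have "integral {0..T} (ux 0) \<le> integral {0..T} (\<lambda>_. 1 + \<theta>)"
    by (rule integral_le) (use flux_range integrable_ux[of 0] in auto)
  ultimately show ?thesis
    using flux T by (simp add: mult.commute)
qed

theorem lemma15:
  fixes h :: "real \<Rightarrow> real" and c :: real
    and \<theta> :: "nat \<Rightarrow> real" and \<theta>inf :: real
    and T :: "nat \<Rightarrow> real" and u :: "nat \<Rightarrow> real \<Rightarrow> real \<Rightarrow> real"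
  assumes h_C2: "C2_fun h"
    and h_per: "\<forall>x. h (x + 2 * pi) = h x"
    and h_max: "(\<forall>x. h x \<le> 1) \<and> (\<exists>x. h x = 1)"
    and h_min: "(\<forall>x. h x \<ge> -1) \<and> h pi = -1"
    and c_pos: "c > 0"
    and th_nonneg: "\<forall>n. 0 \<le> \<theta> n"
    and th_mono: "incseq \<theta>"
    and th_lim: "\<theta> \<longlonglongrightarrow> \<theta>inf"
    and thinf: "0 < \<theta>inf" "\<theta>inf < 1"
    and T_pos: "\<forall>n. T n > 0"
    and sol: "\<forall>n. classical_entire_sol h c (\<theta> n) (u n)"
    and inY: "\<forall>n t. in_Yc c (\<lambda>x. u n x t)"
    and period: "\<forall>n x. x \<ge> 0 \<longrightarrow> u n x (T n) = u n x 0 - 2 * pi"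
    and decr: "\<forall>n x t. x \<ge> 0 \<longrightarrow>
                 (\<exists>D. ((\<lambda>s. u n x s) has_real_derivative D) (at t) \<and> D < 0)"
    and norm: "\<forall>n. u n 0 0 = 0"
  shows "\<exists>lam \<mu>. lam > 0 \<and> \<mu> > 0 \<and> (\<forall>n. 2 * pi / \<mu> \<le> T n \<and> T n \<le> 2 * pi / lam)"
proof -
  have antimono: "u n x t' \<le> u n x t" if "x \<ge> 0" and "t \<le> t'" for n x t t'
    using DERIV_nonpos_imp_nonincreasing[OF that(2), of "u n x"] decr that(1)
    by (meson less_imp_le)
  have h_bound: "\<bar>h y\<bar> \<le> 1" for y
    using h_max h_min by (simp add: abs_le_iff)
  have bounds: "T n * (1 - \<theta> n) \<le> 2 * pi / c \<and> 2 * pi / c \<le> T n * (1 + \<theta> n)" for n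
    using c_pos T_pos sol th_nonneg h_bound period antimono inY
    by (intro period_bounds) auto
  have \<theta>_le: "\<theta> n \<le> \<theta>inf" for n
    by (rule incseq_le[OF th_mono th_lim])
  show ?thesis
  proof (intro exI conjI allI)
    show "c * (1 - \<theta>inf) > 0" and "2 * c > 0"
      using c_pos thinf by auto
    fix n
    have "T n * (1 - \<theta>inf) \<le> T n * (1 - \<theta> n)" and "T n * (1 + \<theta> n) \<le> T n * 2"
      using T_pos \<theta>_le[of n] thinf by (auto intro!: mult_left_mono)
    then have "T n * (1 - \<theta>inf) \<le> 2 * pi / c" and "2 * pi / c \<le> T n * 2"
      using bounds[of n] by linarith+
    then show "T n \<le> 2 * pi / (c * (1 - \<theta>inf))" and "2 * pi / (2 * c) \<le> T n"
      using c_pos thinf by (simp_all add: field_simps)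
  qed
qed

end
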